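(* Let $\Phi:\{0,1\}^n\to\{0,1\}^n$ and $\mu\in\{0,1\}^n$. Then $\overline{W}(\mu)\neq\emptyset$ if and only if $\Phi(\mu)=\mu$; similarly, $\underline{W}(\mu)\neq\emptyset$ if and only if $\Phi(\mu)=\mu$.
   Context: Let $\mathbf{B}=\{0,1\}$ (discrete topology), $n\ge 1$, and $\Phi:\mathbf{B}^n\to\mathbf{B}^n$ a function. For $\nu\in\mathbf{B}^n$ define $\Phi^\nu:\mathbf{B}^n\to\mathbf{B}^n$ coordinatewise by $\Phi^\nu_i(\mu)=\mu_i$ if $\nu_i=0$ and $\Phi^\nu_i(\mu)=\Phi_i(\mu)$ if $\nu_i=1$. For $\alpha^0,\dots,\alpha^k\in\mathbf{B}^n$ put $\Phi^{\alpha^0\dots\alpha^k}=\Phi^{\alpha^k}\circ\cdots\circ\Phi^{\alpha^0}$. A sequence $\alpha=(\alpha^k)_{k\in\mathbf{N}}$ in $\mathbf{B}^n$ is progressive if for every $i\in\{1,\dots,n\}$ the set $\{k:\alpha^k_i=1\}$ is infinite. $Seq$ denotes the set of strictly increasing real sequences $t_0<t_1<\cdots$ unbounded above. $P_n$ is the set of functions $\rho:\mathbf{R}\to\mathbf{B}^n$ of the form $\rho(t_k)=\alpha^k$ for all $k$ and $\rho(t)=0$ for $t\notin\{t_k\}$, where $\alpha$ is progressive and $(t_k)\in Seq$. For such $\rho$ and $\mu\in\mathbf{B}^n$, the orbit is $\Phi^\rho(\mu,t)=\mu$ for $t<t_0$ and $\Phi^\rho(\mu,t)=\Phi^{\alpha^0\dots\alpha^k}(\mu)$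 for $t\in[t_k,t_{k+1})$. The $\omega$-limit set is $\omega_\rho(\mu)=\{\mu'\in\mathbf{B}^n:\exists (s_k)\in Seq$ such that $\Phi^\rho(\mu,s_k)=\mu'$ for all sufficiently large $k\}$. For $\mu\in\mathbf{B}^n$: $\overline{W}(\mu)=\{\mu'\in\mathbf{B}^n:\exists\rho'\in P_n,\ \omega_{\rho'}(\mu')\subset\{\mu\}\}$ and $\underline{W}(\mu)=\{\mu'\in\mathbf{B}^n:\forall\rho'\in P_n,\ \omega_{\rho'}(\mu')\subset\{\mu\}\}$. *)

theory Defs
  imports Complex_Main
begin

text \<open>Boolean vectors in B^n are modelled as functions 'n \<Rightarrow> bool for a finite index
type 'n (so n = CARD('n) \<ge> 1); True stands for 1 and False for 0.\<close>

definition Phi_nu :: "(('n \<Rightarrow> bool) \<Rightarrow> ('n \<Rightarrow> bool)) \<Rightarrow> ('n \<Rightarrow> bool) \<Rightarrow> ('n \<Rightarrow> bool) \<Rightarrow> ('n \<Rightarrow> bool)" where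
  "Phi_nu \<Phi> \<nu> \<mu> = (\<lambda>i. if \<nu> i then \<Phi> \<mu> i else \<mu> i)"

fun Phi_comp :: "(('n \<Rightarrow> bool) \<Rightarrow> ('n \<Rightarrow> bool)) \<Rightarrow> (nat \<Rightarrow> 'n \<Rightarrow> bool) \<Rightarrow> nat \<Rightarrow> ('n \<Rightarrow> bool) \<Rightarrow> ('n \<Rightarrow> bool)" where
  "Phi_comp \<Phi> \<alpha> 0 \<mu> = Phi_nu \<Phi> (\<alpha> 0) \<mu>"
| "Phi_comp \<Phi> \<alpha> (Suc k) \<mu> = Phi_nu \<Phi> (\<alpha> (Suc k)) (Phi_comp \<Phi> \<alpha> k \<mu>)"

definition progressive :: "(nat \<Rightarrow> 'n \<Rightarrow> bool) \<Rightarrow> bool" where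
  "progressive \<alpha> \<longleftrightarrow> (\<forall>i. infinite {k. \<alpha> k i})"

definition Seq :: "(nat \<Rightarrow> real) set" where
  "Seq = {t. strict_mono t \<and> (\<forall>x. \<exists>k. x < t k)}"

definition orbit :: "(('n \<Rightarrow> bool) \<Rightarrow> ('n \<Rightarrow> bool)) \<Rightarrow> (nat \<Rightarrow> 'n \<Rightarrow> bool) \<Rightarrow> (nat \<Rightarrow> real) \<Rightarrow> ('n \<Rightarrow> bool) \<Rightarrow> real \<Rightarrow> ('n \<Rightarrow> bool)" where
  "orbit \<Phi> \<alpha> t \<mu> s = (if s < t 0 then \<mu>
      else Phi_comp \<Phi> \<alpha> (THE k. t k \<le> s \<and> s < t (Suc k)) \<mu>)"

definition omega_lim :: "(('n \<Rightarrow> bool) \<Rightarrow> ('n \<Rightarrow> bool)) \<Rightarrow> (nat \<Rightarrow> 'n \<Rightarrow> bool) \<Rightarrow> (nat \<Rightarrow> real) \<Rightarrow> ('n \<Rightarrow> bool) \<Rightarrow> ('n \<Rightarrow> bool) set" where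
  "omega_lim \<Phi> \<alpha> t \<mu> = {\<mu>'. \<exists>s \<in> Seq. \<exists>K. \<forall>k\<ge>K. orbit \<Phi> \<alpha> t \<mu> (s k) = \<mu>'}"

definition represents :: "(real \<Rightarrow> 'n \<Rightarrow> bool) \<Rightarrow> (nat \<Rightarrow> 'n \<Rightarrow> bool) \<Rightarrow> (nat \<Rightarrow> real) \<Rightarrow> bool" where
  "represents \<rho> \<alpha> t \<longleftrightarrow> progressive \<alpha> \<and> t \<in> Seq \<and> (\<forall>k. \<rho> (t k) = \<alpha> k)
                 \<and> (\<forall>s. s \<notin> range t \<longrightarrow> \<rho> s = (\<lambda>_. False))"

definition P_n :: "(real \<Rightarrow> 'n \<Rightarrow> bool) set" where
  "P_n = {\<rho>. \<exists>\<alpha> t. represents \<rho> \<alpha> t}"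

text \<open>omega_rho(mu), computed from a chosen representation (\<alpha>, t) of rho
(the orbit does not depend on the choice).\<close>
definition omega_rho :: "(('n \<Rightarrow> bool) \<Rightarrow> ('n \<Rightarrow> bool)) \<Rightarrow> (real \<Rightarrow> 'n \<Rightarrow> bool) \<Rightarrow> ('n \<Rightarrow> bool) \<Rightarrow> ('n \<Rightarrow> bool) set" where
  "omega_rho \<Phi> \<rho> \<mu> = (case (SOME p. represents \<rho> (fst p) (snd p)) of (\<alpha>, t) \<Rightarrow> omega_lim \<Phi> \<alpha> t \<mu>)"

definition W_upper :: "(('n \<Rightarrow> bool) \<Rightarrow> ('n \<Rightarrow> bool)) \<Rightarrow> ('n \<Rightarrow> bool) \<Rightarrow> ('n \<Rightarrow> bool) set" where
  "W_upper \<Phi> \<mu> = {\<mu>'. \<exists>\<rho> \<in> P_n. omega_rho \<Phi> \<rho> \<mu>' \<subseteq> {\<mu>}}"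

definition W_lower :: "(('n \<Rightarrow> bool) \<Rightarrow> ('n \<Rightarrow> bool)) \<Rightarrow> ('n \<Rightarrow> bool) \<Rightarrow> ('n \<Rightarrow> bool) set" where
  "W_lower \<Phi> \<mu> = {\<mu>'. \<forall>\<rho> \<in> P_n. omega_rho \<Phi> \<rho> \<mu>' \<subseteq> {\<mu>}}"

end

theory Submission
  imports Defs "HOL-Library.Infinite_Set"
begin

text \<open>At a fixed point every \<open>\<Phi>\<^sup>\<nu>\<close> acts trivially, so every orbit starting there is constant.
Conversely, if some orbit has \<open>\<omega>\<close>-limit set inside \<open>{\<mu>}\<close>, then, the state space being finite,
the discrete trajectory is eventually equal to \<open>\<mu>\<close> (a value different from \<open>\<mu>\<close> visited infinitely
often would lie in the \<open>\<omega>\<close>-limit set); since the signal is progressive, each coordinate is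
updated at some later step, which forces \<open>\<Phi>\<^sub>i \<mu> = \<mu>\<^sub>i\<close> for every \<open>i\<close>.
Finally \<open>W_lower \<subseteq> W_upper\<close> because \<open>P_n\<close> is nonempty.\<close>

lemma Seq_comp_strict_mono:
  assumes "t \<in> Seq" and "strict_mono g"
  shows "t \<circ> g \<in> Seq"
  unfolding Seq_def
proof (intro CollectI conjI allI)
  have t: "strict_mono t" "\<forall>x. \<exists>k. x < t k" using assms(1) by (auto simp: Seq_def)
  show "strict_mono (t \<circ> g)" using t(1) assms(2) by (simp add: strict_mono_def)
  fix x
  obtain k where "x < t k" using t(2) by blast
  also have "t k \<le> t (g k)"
    using t(1) assms(2) by (simp add: strict_mono_less_eq strict_mono_imp_increasing)
  finally show "\<exists>k. x < (t \<circ> g) k" by auto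
qed

lemma orbit_at_Seq:
  assumes "t \<in> Seq"
  shows "orbit \<Phi> \<alpha> t \<mu> (t k) = Phi_comp \<Phi> \<alpha> k \<mu>"
proof -
  have t: "strict_mono t" using assms by (simp add: Seq_def)
  have "(THE k'. t k' \<le> t k \<and> t k < t (Suc k')) = k"
  proof (rule the_equality)
    fix k' assume "t k' \<le> t k \<and> t k < t (Suc k')"
    then have "k' \<le> k" "k < Suc k'" using t by (auto simp: strict_mono_less_eq strict_mono_less)
    then show "k' = k" by simp
  qed (use t in \<open>simp add: strict_mono_less\<close>)
  moreover have "\<not> t k < t 0" using t by (simp add: strict_mono_less)
  ultimately show ?thesis by (simp add: orbit_def)
qed

lemma Phi_comp_fixpoint:
  assumes "\<Phi> \<mu> = \<mu>"
  shows "Phi_comp \<Phi> \<alpha> k \<mu> = \<mu>"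
  by (induction k) (simp_all add: Phi_nu_def assms)

lemma omega_lim_fixpoint:
  assumes "\<Phi> \<mu> = \<mu>"
  shows "omega_lim \<Phi> \<alpha> t \<mu> \<subseteq> {\<mu>}"
proof -
  have "orbit \<Phi> \<alpha> t \<mu> s = \<mu>" for s
    by (simp add: orbit_def Phi_comp_fixpoint[of \<Phi> \<mu>, OF assms])
  then show ?thesis unfolding omega_lim_def by auto
qed

lemma in_omega_lim_if_infinitely_often:
  assumes "t \<in> Seq" and "infinite {k. Phi_comp \<Phi> \<alpha> k \<mu> = \<nu>}"
  shows "\<nu> \<in> omega_lim \<Phi> \<alpha> t \<mu>"
proof -
  define g where "g = enumerate {k. Phi_comp \<Phi> \<alpha> k \<mu> = \<nu>}"
  have "t \<circ> g \<in> Seq"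
    using Seq_comp_strict_mono[OF assms(1)] strict_mono_enumerate[OF assms(2)] by (simp add: g_def)
  moreover have "orbit \<Phi> \<alpha> t \<mu> ((t \<circ> g) j) = \<nu>" for j
    using enumerate_in_set[OF assms(2)] by (simp add: g_def orbit_at_Seq[OF assms(1)])
  ultimately show ?thesis unfolding omega_lim_def by blast
qed

lemma Phi_comp_eventually_eq:
  fixes \<Phi> :: "('n::finite \<Rightarrow> bool) \<Rightarrow> ('n \<Rightarrow> bool)"
  assumes "t \<in> Seq" and "omega_lim \<Phi> \<alpha> t \<mu>' \<subseteq> {\<mu>}"
  shows "\<exists>K. \<forall>k\<ge>K. Phi_comp \<Phi> \<alpha> k \<mu>' = \<mu>"
proof -
  let ?f = "\<lambda>k. Phi_comp \<Phi> \<alpha> k \<mu>'"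
  have "finite {k. ?f k \<noteq> \<mu>}"
  proof (rule ccontr)
    assume inf: "infinite {k. ?f k \<noteq> \<mu>}"
    have fin: "finite (?f ` {k. ?f k \<noteq> \<mu>})" by (rule finite_subset[OF subset_UNIV]) simp
    obtain \<nu> where \<nu>: "\<nu> \<in> ?f ` {k. ?f k \<noteq> \<mu>}"
      and inf_\<nu>: "infinite (?f -` {\<nu>} \<inter> {k. ?f k \<noteq> \<mu>})"
      by (rule inf_img_fin_domE'[OF fin inf])
    have "infinite {k. ?f k = \<nu>}"
      using inf_\<nu> by (rule infinite_super[rotated]) auto
    moreover have "\<nu> \<noteq> \<mu>" using \<nu> by auto
    ultimately show False
      using in_omega_lim_if_infinitely_often[OF assms(1)] assms(2) by blast
  qed
  then obtain m where "\<forall>k\<in>{k. ?f k \<noteq> \<mu>}. k \<le> m"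
    using finite_nat_set_iff_bounded_le by blast
  then have "\<forall>k\<ge>Suc m. ?f k = \<mu>" by force
  then show ?thesis by blast
qed

lemma fixpoint_if_eventually_eq:
  assumes "progressive \<alpha>" and "\<forall>k\<ge>K. Phi_comp \<Phi> \<alpha> k \<mu>' = \<mu>"
  shows "\<Phi> \<mu> = \<mu>"
proof
  fix i
  have "infinite {k. \<alpha> k i}" using assms(1) by (simp add: progressive_def)
  then obtain k' where "\<alpha> k' i" "k' > K"
    unfolding infinite_nat_iff_unbounded by auto
  then obtain k where update: "\<alpha> (Suc k) i" and "k \<ge> K"
    by (cases k') auto
  then have "Phi_comp \<Phi> \<alpha> k \<mu>' = \<mu>" "Phi_comp \<Phi> \<alpha> (Suc k) \<mu>' = \<mu>"
    using assms(2) le_SucI by blast+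
  then have "\<mu> i = Phi_nu \<Phi> (\<alpha> (Suc k)) \<mu> i"
    by (metis Phi_comp.simps(2))
  with update show "\<Phi> \<mu> i = \<mu> i" by (simp add: Phi_nu_def)
qed

lemma omega_rho_representation:
  assumes "\<rho> \<in> P_n"
  obtains \<alpha> t where "represents \<rho> \<alpha> t" and "omega_rho \<Phi> \<rho> \<mu> = omega_lim \<Phi> \<alpha> t \<mu>"
proof -
  have "\<exists>p. represents \<rho> (fst p) (snd p)" using assms by (auto simp: P_n_def)
  then have "represents \<rho> (fst (SOME p. represents \<rho> (fst p) (snd p)))
                           (snd (SOME p. represents \<rho> (fst p) (snd p)))"
    by (rule someI_ex)
  then show ?thesis using that by (auto simp: omega_rho_def split: prod.splits)
qed

lemma P_n_nonempty: "P_n \<noteq> {}"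
proof -
  have "represents (\<lambda>s. if s \<in> range real then (\<lambda>_. True) else (\<lambda>_. False)) (\<lambda>_ _. True) real"
    unfolding represents_def progressive_def Seq_def
    by (auto simp: strict_mono_def intro: reals_Archimedean2)
  then show ?thesis unfolding P_n_def by blast
qed

lemma fixpoint_if_W_upper_nonempty:
  fixes \<Phi> :: "('n::finite \<Rightarrow> bool) \<Rightarrow> ('n \<Rightarrow> bool)"
  assumes "W_upper \<Phi> \<mu> \<noteq> {}"
  shows "\<Phi> \<mu> = \<mu>"
proof -
  obtain \<mu>' \<rho> where "\<rho> \<in> P_n" and \<omega>: "omega_rho \<Phi> \<rho> \<mu>' \<subseteq> {\<mu>}"
    using assms unfolding W_upper_def by blast
  obtain \<alpha> t where rep: "represents \<rho> \<alpha> t" and "omega_rho \<Phi> \<rho> \<mu>' = omega_lim \<Phi> \<alpha> t \<mu>'"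
    using omega_rho_representation[OF \<open>\<rho> \<in> P_n\<close>] by blast
  with \<omega> have "omega_lim \<Phi> \<alpha> t \<mu>' \<subseteq> {\<mu>}" by simp
  moreover have "progressive \<alpha>" "t \<in> Seq" using rep by (auto simp: represents_def)
  ultimately obtain K where "\<forall>k\<ge>K. Phi_comp \<Phi> \<alpha> k \<mu>' = \<mu>"
    using Phi_comp_eventually_eq by blast
  with \<open>progressive \<alpha>\<close> show ?thesis by (rule fixpoint_if_eventually_eq)
qed

lemma fixpoint_in_W_lower:
  fixes \<Phi> :: "('n \<Rightarrow> bool) \<Rightarrow> ('n \<Rightarrow> bool)"
  assumes "\<Phi> \<mu> = \<mu>"
  shows "\<mu> \<in> W_lower \<Phi> \<mu>"
  unfolding W_lower_def
proof (intro CollectI ballI)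
  fix \<rho> :: "real \<Rightarrow> 'n \<Rightarrow> bool" assume "\<rho> \<in> P_n"
  then obtain \<alpha> t where "omega_rho \<Phi> \<rho> \<mu> = omega_lim \<Phi> \<alpha> t \<mu>"
    by (rule omega_rho_representation)
  then show "omega_rho \<Phi> \<rho> \<mu> \<subseteq> {\<mu>}" using omega_lim_fixpoint[of \<Phi> \<mu>, OF assms] by simp
qed

lemma W_lower_subset_W_upper: "W_lower \<Phi> \<mu> \<subseteq> W_upper \<Phi> \<mu>"
  using P_n_nonempty unfolding W_lower_def W_upper_def by blast

theorem theorem40:
  fixes \<Phi> :: "('n::finite \<Rightarrow> bool) \<Rightarrow> ('n \<Rightarrow> bool)" and \<mu> :: "'n \<Rightarrow> bool"
  shows "(W_upper \<Phi> \<mu> \<noteq> {} \<longleftrightarrow> \<Phi> \<mu> = \<mu>) \<and> (W_lower \<Phi> \<mu> \<noteq> {} \<longleftrightarrow> \<Phi> \<mu> = \<mu>)"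
proof -
  have "\<Phi> \<mu> = \<mu> \<Longrightarrow> W_lower \<Phi> \<mu> \<noteq> {}"
    using fixpoint_in_W_lower[of \<Phi> \<mu>] by blast
  moreover have "W_lower \<Phi> \<mu> \<noteq> {} \<Longrightarrow> W_upper \<Phi> \<mu> \<noteq> {}"
    using W_lower_subset_W_upper[of \<Phi> \<mu>] by blast
  ultimately show ?thesis
    using fixpoint_if_W_upper_nonempty[of \<Phi> \<mu>] by blast
qed

end
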